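(* Let $G$ be a bounded-length, turn-based Dec-POMDP. Applying OBL with temperature $0$ to any constant policy $\pi_0(a\mid\tau^i)=f(a)$, or more generally to any policy $\pi_0$ that conditions only on the public state, yields an optimal grounded policy.
   Context: A Dec-POMDP $G$ has states $s$, actions $a$, per-player observation functions $\Omega^i(s)$ (observations $o^i_t$), transition function $\mathcal{T}$, and common reward $R(s,a)$; it is turn-based (only one player acts at each state) and reaches a terminal state after at most $t_{max}$ steps. The AOH of player $i$ at time $t$ is $\tau^i_t=(\Omega^i(s_1),a_1,\dots,a_{t-1},\Omega^i(s_t))$; policies map AOHs to action distributions. $V^{\pi}(\tau)$ is the expected future return when all players play $\pi$ from trajectory $\tau$. The belief induced by $\pi_0$ is $\mathcal{B}_{\pi_0}(\tau\mid\tau^i)=P(\tau\mid\tau^i,\pi_0)$, and $$Q^{\pi_0\to\pi_1}(a\mid\tau^i_t)=\sum_{\tau_t}\mathcal{B}_{\pi_0}(\tau_t\mid\tau^i_t)\Big[R(s_t,a)+\sum_{\tau_{t+1}}\mathcal{T}(\tau_{t+1}\mid\tau_t,a)V^{\pi_1}(\tau_{t+1})\Big].$$ OBL at temperature $0$ from $\pi_0$ produces a policy $\pi_1$ with $\pi_1(\tau^i)\in\arg\max_a Q^{\pi_0\to\pi_1}(a\mid\tau^i)$ at every AOH of an acting player. The grounded belief conditions only on observations, not on partner actions: $$\mathcal{B}_G(\tau\mid\tau^i)=\frac{P(\tau)\prod_t P(o^i_t\mid\tau)}{\sum_{\tau'}P(\tau')\prod_t P(o^i_t\mid\tau')}.$$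 An optimal grounded policy $\pi_G$ plays, at each AOH $\tau^i$, an action maximizing expected return assuming the trajectory at $\tau^i$ is distributed according to $\mathcal{B}_G(\cdot\mid\tau^i)$ and that $\pi_G$ is played by all players thereafter.
   Formalization: The policy $\pi_0$ also gives every action positive probability at every AOH, $\pi_0(a\mid\tau^i)>0$ for all $\tau^i$ and a, so a constant policy $f(a)$ has $f(a)>0$ for every action a. The statement above fails without it. *)

theory Defs
  imports "HOL-Probability.Probability_Mass_Function"
begin

record ('s, 'a, 'o, 'p) decpomdp =
  dp_init     :: "'s pmf"
  dp_trans    :: "'s \<Rightarrow> 'a \<Rightarrow> 's pmf"
  dp_rew      :: "'s \<Rightarrow> 'a \<Rightarrow> real"
  dp_obs      :: "'p \<Rightarrow> 's \<Rightarrow> 'o"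
  dp_actor    :: "'s \<Rightarrow> 'p"
  dp_terminal :: "'s \<Rightarrow> bool"

text \<open>A trajectory (s_1,a_1,...,a_{t-1},s_t) is represented as the list of past
  (state, action) pairs together with the current state.\<close>
type_synonym ('s, 'a) traj = "('s \<times> 'a) list \<times> 's"

type_synonym ('o, 'a) aoh = "('o \<times> 'a) list \<times> 'o"

type_synonym ('p, 'o, 'a) policy = "'p \<Rightarrow> ('o, 'a) aoh \<Rightarrow> 'a pmf"

definition aoh :: "('s,'a,'o,'p,'x) decpomdp_scheme \<Rightarrow> 'p \<Rightarrow> ('s,'a) traj \<Rightarrow> ('o,'a) aoh" where
  "aoh G i \<tau> = (map (\<lambda>(s,a). (dp_obs G i s, a)) (fst \<tau>), dp_obs G i (snd \<tau>))"

definition traj_states :: "('s,'a) traj \<Rightarrow> 's list" where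
  "traj_states \<tau> = map fst (fst \<tau>) @ [snd \<tau>]"

definition traj_prefix :: "('s,'a) traj \<Rightarrow> nat \<Rightarrow> ('s,'a) traj" where
  "traj_prefix \<tau> k = (take k (fst \<tau>), traj_states \<tau> ! k)"

text \<open>Environment probability P(tau) of a trajectory for its given actions
  (initial state and transitions; play stops at terminal states).\<close>
definition penv :: "('s,'a,'o,'p,'x) decpomdp_scheme \<Rightarrow> ('s,'a) traj \<Rightarrow> real" where
  "penv G \<tau> =
     (if (\<forall>x\<in>set (fst \<tau>). \<not> dp_terminal G (fst x))
      then pmf (dp_init G) (hd (traj_states \<tau>)) *
           (\<Prod>k<length (fst \<tau>).
              pmf (dp_trans G (fst (fst \<tau> ! k)) (snd (fst \<tau> ! k))) (traj_states \<tau> ! Suc k))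
      else 0)"

definition ppol :: "('s,'a,'o,'p,'x) decpomdp_scheme \<Rightarrow> ('p,'o,'a) policy \<Rightarrow> ('s,'a) traj \<Rightarrow> real" where
  "ppol G \<pi> \<tau> =
     (\<Prod>k<length (fst \<tau>).
        pmf (\<pi> (dp_actor G (fst (fst \<tau> ! k))) (aoh G (dp_actor G (fst (fst \<tau> ! k))) (traj_prefix \<tau> k)))
            (snd (fst \<tau> ! k)))"

definition trajs :: "nat \<Rightarrow> ('s,'a) traj set" where
  "trajs n = {\<tau>. length (fst \<tau>) = n}"

definition belief_pol ::
  "('s,'a,'o,'p,'x) decpomdp_scheme \<Rightarrow> ('p,'o,'a) policy \<Rightarrow> 'p \<Rightarrow> ('o,'a) aoh \<Rightarrow> ('s,'a) traj \<Rightarrow> real" where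
  "belief_pol G \<pi>0 i h \<tau> =
     (if aoh G i \<tau> = h then penv G \<tau> * ppol G \<pi>0 \<tau> else 0) /
     (\<Sum>\<tau>'\<in>trajs (length (fst h)). if aoh G i \<tau>' = h then penv G \<tau>' * ppol G \<pi>0 \<tau>' else 0)"

text \<open>Grounded belief: conditions only on observations, not on partner actions.\<close>
definition belief_grounded ::
  "('s,'a,'o,'p,'x) decpomdp_scheme \<Rightarrow> 'p \<Rightarrow> ('o,'a) aoh \<Rightarrow> ('s,'a) traj \<Rightarrow> real" where
  "belief_grounded G i h \<tau> =
     (if aoh G i \<tau> = h then penv G \<tau> else 0) /
     (\<Sum>\<tau>'\<in>trajs (length (fst h)). if aoh G i \<tau>' = h then penv G \<tau>' else 0)"

primrec Vf :: "('s::finite,'a::finite,'o,'p,'x) decpomdp_scheme \<Rightarrow> ('p,'o,'a) policy \<Rightarrow> nat \<Rightarrow> ('s,'a) traj \<Rightarrow> real" where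
  "Vf G \<pi> 0 \<tau> = 0"
| "Vf G \<pi> (Suc n) \<tau> =
     (if dp_terminal G (snd \<tau>) then 0
      else (\<Sum>a\<in>UNIV. pmf (\<pi> (dp_actor G (snd \<tau>)) (aoh G (dp_actor G (snd \<tau>)) \<tau>)) a *
              (dp_rew G (snd \<tau>) a +
               (\<Sum>s'\<in>UNIV. pmf (dp_trans G (snd \<tau>) a) s' * Vf G \<pi> n (fst \<tau> @ [(snd \<tau>, a)], s')))))"

definition bounded_length :: "('s,'a,'o,'p,'x) decpomdp_scheme \<Rightarrow> nat \<Rightarrow> bool" where
  "bounded_length G tmax \<longleftrightarrow>
     (\<forall>\<tau>::('s,'a) traj. length (fst \<tau>) = tmax \<longrightarrow> penv G \<tau> > 0 \<longrightarrow> dp_terminal G (snd \<tau>))"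

text \<open>V^pi(tau); tmax steps of fuel suffice in a game of length at most tmax.\<close>
definition V :: "('s::finite,'a::finite,'o,'p,'x) decpomdp_scheme \<Rightarrow> nat \<Rightarrow> ('p,'o,'a) policy \<Rightarrow> ('s,'a) traj \<Rightarrow> real" where
  "V G tmax \<pi> \<tau> = Vf G \<pi> tmax \<tau>"

definition Q_belief ::
  "('s::finite,'a::finite,'o,'p,'x) decpomdp_scheme \<Rightarrow> nat \<Rightarrow> (('s,'a) traj \<Rightarrow> real) \<Rightarrow> ('p,'o,'a) policy
     \<Rightarrow> ('o,'a) aoh \<Rightarrow> 'a \<Rightarrow> real" where
  "Q_belief G tmax B \<pi>1 h a =
     (\<Sum>\<tau>\<in>trajs (length (fst h)). B \<tau> *
        (dp_rew G (snd \<tau>) a +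
         (\<Sum>s'\<in>UNIV. pmf (dp_trans G (snd \<tau>) a) s' * V G tmax \<pi>1 (fst \<tau> @ [(snd \<tau>, a)], s'))))"

definition Q_obl ::
  "('s::finite,'a::finite,'o,'p,'x) decpomdp_scheme \<Rightarrow> nat \<Rightarrow> ('p,'o,'a) policy \<Rightarrow> ('p,'o,'a) policy
     \<Rightarrow> 'p \<Rightarrow> ('o,'a) aoh \<Rightarrow> 'a \<Rightarrow> real" where
  "Q_obl G tmax \<pi>0 \<pi>1 i h a = Q_belief G tmax (belief_pol G \<pi>0 i h) \<pi>1 h a"

definition Q_grounded ::
  "('s::finite,'a::finite,'o,'p,'x) decpomdp_scheme \<Rightarrow> nat \<Rightarrow> ('p,'o,'a) policy
     \<Rightarrow> 'p \<Rightarrow> ('o,'a) aoh \<Rightarrow> 'a \<Rightarrow> real" where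
  "Q_grounded G tmax \<pi> i h a = Q_belief G tmax (belief_grounded G i h) \<pi> h a"

definition acting_aoh :: "('s,'a,'o,'p,'x) decpomdp_scheme \<Rightarrow> 'p \<Rightarrow> ('o,'a) aoh \<Rightarrow> bool" where
  "acting_aoh G i h \<longleftrightarrow>
     (\<exists>\<tau>. aoh G i \<tau> = h \<and> penv G \<tau> > 0 \<and> \<not> dp_terminal G (snd \<tau>) \<and> dp_actor G (snd \<tau>) = i)"

definition obl_temp0 ::
  "('s::finite,'a::finite,'o,'p,'x) decpomdp_scheme \<Rightarrow> nat \<Rightarrow> ('p,'o,'a) policy \<Rightarrow> ('p,'o,'a) policy \<Rightarrow> bool" where
  "obl_temp0 G tmax \<pi>0 \<pi>1 \<longleftrightarrow>
     (\<forall>i h. acting_aoh G i h \<longrightarrow>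
        set_pmf (\<pi>1 i h) \<subseteq> {a. \<forall>b. Q_obl G tmax \<pi>0 \<pi>1 i h b \<le> Q_obl G tmax \<pi>0 \<pi>1 i h a})"

definition optimal_grounded ::
  "('s::finite,'a::finite,'o,'p,'x) decpomdp_scheme \<Rightarrow> nat \<Rightarrow> ('p,'o,'a) policy \<Rightarrow> bool" where
  "optimal_grounded G tmax \<pi> \<longleftrightarrow>
     (\<forall>i h. acting_aoh G i h \<longrightarrow>
        set_pmf (\<pi> i h) \<subseteq> {a. \<forall>b. Q_grounded G tmax \<pi> i h b \<le> Q_grounded G tmax \<pi> i h a})"

definition public_policy ::
  "('s,'a,'o,'p,'x) decpomdp_scheme \<Rightarrow> ('s \<Rightarrow> 'u) \<Rightarrow> ('p,'o,'a) policy \<Rightarrow> bool" where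
  "public_policy G pub \<pi> \<longleftrightarrow>
     (\<exists>g F. (\<forall>i s. pub s = g i (dp_obs G i s)) \<and>
            (\<forall>i h. \<pi> i h = F (map (\<lambda>(o',a). (g i o', a)) (fst h), g i (snd h))))"

definition constant_policy :: "('p,'o,'a) policy \<Rightarrow> bool" where
  "constant_policy \<pi> \<longleftrightarrow> (\<exists>f. \<forall>i h. \<pi> i h = f)"

definition full_support :: "('p,'o,'a) policy \<Rightarrow> bool" where
  "full_support \<pi> \<longleftrightarrow> (\<forall>i h a. pmf (\<pi> i h) a > 0)"

end

theory Submission
  imports Defs
begin

text \<open>A policy that conditions only on the public state assigns every trajectory a
  probability that depends only on its public projection, and the public projection is
  a function of each player's AOH. Hence, if the policy also has full support, all
  trajectories consistent with an AOH carry the same positive action probability, so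
  conditioning on the partners' actions does not change the belief: the belief induced
  by \<open>\<pi>\<^sub>0\<close> is the grounded belief. Then the OBL Q-values coincide with the grounded ones,
  and a temperature-0 OBL policy, being greedy for them, is an optimal grounded policy.
  A constant policy is the special case of the trivial public state.\<close>

definition map_states :: "('s \<Rightarrow> 't) \<Rightarrow> ('s, 'a) traj \<Rightarrow> ('t, 'a) traj" where
  "map_states f \<tau> = (map (\<lambda>(s, a). (f s, a)) (fst \<tau>), f (snd \<tau>))"

lemma aoh_eq_map_states: "aoh G i = map_states (dp_obs G i)"
  by (simp add: fun_eq_iff aoh_def map_states_def)

lemma map_states_map_states: "map_states f (map_states g \<tau>) = map_states (f \<circ> g) \<tau>"
  by (simp add: map_states_def case_prod_beta comp_def)

lemma length_map_states [simp]: "length (fst (map_states f \<tau>)) = length (fst \<tau>)"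
  by (simp add: map_states_def)

lemma action_map_states:
  "k < length (fst \<tau>) \<Longrightarrow> snd (fst (map_states f \<tau>) ! k) = snd (fst \<tau> ! k)"
  by (simp add: map_states_def case_prod_beta)

lemma traj_prefix_map_states:
  assumes "k \<le> length (fst \<tau>)"
  shows "traj_prefix (map_states f \<tau>) k = map_states f (traj_prefix \<tau> k)"
  using assms
  by (simp add: traj_prefix_def map_states_def traj_states_def take_map nth_append
      case_prod_beta comp_def)

lemma public_policy_obs:
  assumes "public_policy G pub \<pi>"
  obtains g F where "\<And>i. pub = g i \<circ> dp_obs G i" and "\<And>i h. \<pi> i h = F (map_states (g i) h)"
proof -
  obtain g F where "\<And>i s. pub s = g i (dp_obs G i s)"
    and "\<And>i h. \<pi> i h = F (map (\<lambda>(o', a). (g i o', a)) (fst h), g i (snd h))"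
    using assms unfolding public_policy_def by blast
  then show thesis
    by (intro that[of g F]) (simp_all add: fun_eq_iff map_states_def)
qed

lemma public_policy_aoh_factorization:
  assumes "public_policy G pub \<pi>"
  obtains F where "\<And>i \<tau>. \<pi> i (aoh G i \<tau>) = F (map_states pub \<tau>)"
proof -
  obtain g F where pub: "\<And>i. pub = g i \<circ> dp_obs G i" and F: "\<And>i h. \<pi> i h = F (map_states (g i) h)"
    using public_policy_obs[OF assms] by blast
  have "\<pi> i (aoh G i \<tau>) = F (map_states pub \<tau>)" for i \<tau>
    unfolding F aoh_eq_map_states map_states_map_states pub[of i] ..
  then show thesis by (rule that)
qed

lemma map_states_public_cong:
  assumes "public_policy G pub \<pi>" and "aoh G i \<tau> = aoh G i \<tau>'"
  shows "map_states pub \<tau> = map_states pub \<tau>'"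
proof -
  obtain g where pub: "pub = g i \<circ> dp_obs G i"
    using public_policy_obs[OF assms(1)] by metis
  show ?thesis
    using assms(2) unfolding pub aoh_eq_map_states map_states_map_states[symmetric] by simp
qed

lemma ppol_public_factorization:
  assumes "public_policy G pub \<pi>"
  obtains \<Phi> where "\<And>\<tau>. ppol G \<pi> \<tau> = \<Phi> (map_states pub \<tau>)"
proof -
  obtain F where F: "\<And>i \<tau>. \<pi> i (aoh G i \<tau>) = F (map_states pub \<tau>)"
    using public_policy_aoh_factorization[OF assms] by blast
  have "ppol G \<pi> \<tau> = (\<Prod>k<length (fst (map_states pub \<tau>)).
      pmf (F (traj_prefix (map_states pub \<tau>) k)) (snd (fst (map_states pub \<tau>) ! k)))" for \<tau>
    unfolding ppol_def F length_map_states
    by (rule prod.cong) (simp_all add: traj_prefix_map_states action_map_states)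
  then show thesis by (rule that)
qed

lemma ppol_public_cong:
  assumes "public_policy G pub \<pi>" and "aoh G i \<tau> = aoh G i \<tau>'"
  shows "ppol G \<pi> \<tau> = ppol G \<pi> \<tau>'"
proof -
  obtain \<Phi> where "\<And>\<tau>. ppol G \<pi> \<tau> = \<Phi> (map_states pub \<tau>)"
    using ppol_public_factorization[OF assms(1)] by blast
  then show ?thesis using map_states_public_cong[OF assms] by simp
qed

lemma constant_policy_imp_public_policy:
  "constant_policy \<pi> \<Longrightarrow> public_policy G (\<lambda>_. ()) \<pi>"
  unfolding constant_policy_def public_policy_def by auto

lemma ppol_pos: "full_support \<pi> \<Longrightarrow> ppol G \<pi> \<tau> > 0"
  unfolding ppol_def full_support_def by (rule prod_pos) blast

lemma belief_pol_eq_belief_grounded_if_ppol_const: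
  assumes "\<And>\<tau>. aoh G i \<tau> = h \<Longrightarrow> ppol G \<pi> \<tau> = c" and "c > 0"
  shows "belief_pol G \<pi> i h = belief_grounded G i h"
proof
  fix \<tau>
  have weighted: "(if aoh G i \<tau>' = h then penv G \<tau>' * ppol G \<pi> \<tau>' else 0)
                = c * (if aoh G i \<tau>' = h then penv G \<tau>' else 0)" for \<tau>'
    using assms(1) by auto
  show "belief_pol G \<pi> i h \<tau> = belief_grounded G i h \<tau>"
    unfolding belief_pol_def belief_grounded_def weighted sum_distrib_left[symmetric]
    using assms(2) by simp
qed

lemma belief_pol_public_eq_belief_grounded:
  assumes "public_policy G pub \<pi>" and "full_support \<pi>"
  shows "belief_pol G \<pi> i h = belief_grounded G i h"
proof (cases "\<exists>\<tau>\<^sub>0. aoh G i \<tau>\<^sub>0 = h")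
  case True
  then obtain \<tau>\<^sub>0 where "aoh G i \<tau>\<^sub>0 = h" by blast
  then have "ppol G \<pi> \<tau> = ppol G \<pi> \<tau>\<^sub>0" if "aoh G i \<tau> = h" for \<tau>
    using ppol_public_cong[OF assms(1)] that by metis
  then show ?thesis
    using belief_pol_eq_belief_grounded_if_ppol_const ppol_pos[OF assms(2)] by metis
next
  case False
  then show ?thesis
    using belief_pol_eq_belief_grounded_if_ppol_const[of G i h \<pi> 1] by auto
qed

lemma obl_temp0_optimal_grounded_if_beliefs_agree:
  assumes "\<And>i h. belief_pol G \<pi>\<^sub>0 i h = belief_grounded G i h"
    and "obl_temp0 G tmax \<pi>\<^sub>0 \<pi>\<^sub>1"
  shows "optimal_grounded G tmax \<pi>\<^sub>1"
proof -
  have "Q_obl G tmax \<pi>\<^sub>0 \<pi>\<^sub>1 i h = Q_grounded G tmax \<pi>\<^sub>1 i h" for i h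
    unfolding Q_obl_def Q_grounded_def assms(1) ..
  then show ?thesis
    using assms(2) unfolding obl_temp0_def optimal_grounded_def by presburger
qed

text \<open>The hypothesis \<open>bounded_length G tmax\<close> is not needed: values are computed with
  the fixed horizon \<open>tmax\<close> anyway, and the argument only compares beliefs.\<close>

theorem theorem4:
  fixes G :: "('s::finite, 'a::finite, 'o::finite, 'p) decpomdp"
    and tmax :: nat
    and pub :: "'s \<Rightarrow> 'u"
    and \<pi>0 \<pi>1 :: "('p, 'o, 'a) policy"
  assumes "bounded_length G tmax"
    and "constant_policy \<pi>0 \<or> public_policy G pub \<pi>0"
    and "full_support \<pi>0"
    and "obl_temp0 G tmax \<pi>0 \<pi>1"
  shows "optimal_grounded G tmax \<pi>1"
proof (rule obl_temp0_optimal_grounded_if_beliefs_agree[OF _ assms(4)])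
  fix i h
  from assms(2) show "belief_pol G \<pi>0 i h = belief_grounded G i h"
  proof
    assume "constant_policy \<pi>0"
    then show ?thesis
      by (rule belief_pol_public_eq_belief_grounded[OF constant_policy_imp_public_policy assms(3)])
  next
    assume "public_policy G pub \<pi>0"
    then show ?thesis by (intro belief_pol_public_eq_belief_grounded assms(3))
  qed
qed

end
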